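(* Let $U$ be a Banach space with normalized unconditional basis $(e_j)$ whose normalized coordinate functionals $(e_j^* )$ form an unconditional weak$^*$ Schauder basis of $U^*$. If $\ell^1$ does not embed isomorphically into $U^*$, then $U^*$ together with $(e_j^* )$ satisfies condition (C).
   Context: Weak$^*$ Schauder basis: $x^*=\text{weak}^*\text{-}\lim_n\sum_{j=1}^n\langle x^*,e_j\rangle e_j^*$ for all $x^*\in U^*$. Unconditional: there is $C\ge1$ with $\|\sum_j\gamma_ja_je_j^*\|\le C\sup_j|\gamma_j|\,\|\sum_ja_je_j^*\|$ for bounded $(\gamma_j)$. For $\mathcal{A}\subset\mathbb{N}$, $P_{\mathcal{A}}(\sum_ja_je_j^* )=\sum_{j\in\mathcal{A}}a_je_j^*$. Condition (C): for every infinite $\Lambda\subset\mathbb{N}$ and every $\theta>0$ there is a sequence $(\mathcal{A}_j)$ of pairwise disjoint infinite subsets of $\Lambda$ such that for every $(x_j^* )\subset U^*$ with $\|x_j^*\|\le1$ there are scalars $(a_j)\in\ell^1$ with $\|(a_j)\|_{\ell^1}=1$ and $\|\sum_{j=1}^\infty a_jP_{\mathcal{A}_j}x_j^*\|_{U^*}\le\theta$ (weak$^*$ convergent series). *)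

theory Defs
  imports "HOL-Analysis.Analysis"
begin

text \<open>Real Banach space U = type 'a::banach; its dual U* = ('a \<Rightarrow>L real)
  (bounded linear functionals with the operator norm).
  Weak* convergence in U* = pointwise convergence on every x in U.\<close>

definition schauder_basis :: "(nat \<Rightarrow> 'a::real_normed_vector) \<Rightarrow> bool" where
  "schauder_basis e \<longleftrightarrow> (\<forall>x. \<exists>!a. (\<lambda>n. \<Sum>j<n. a j *\<^sub>R e j) \<longlonglongrightarrow> x)"

definition unconditional_basis :: "(nat \<Rightarrow> 'a::real_normed_vector) \<Rightarrow> bool" where
  "unconditional_basis e \<longleftrightarrow> schauder_basis e \<and>
     (\<forall>x a. (\<lambda>n. \<Sum>j<n. a j *\<^sub>R e j) \<longlonglongrightarrow> x \<longrightarrow> ((\<lambda>j. a j *\<^sub>R e j) has_sum x) UNIV)"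

definition coordinate_functionals ::
  "(nat \<Rightarrow> 'a::real_normed_vector) \<Rightarrow> (nat \<Rightarrow> ('a \<Rightarrow>\<^sub>L real)) \<Rightarrow> bool" where
  "coordinate_functionals e es \<longleftrightarrow>
     (\<forall>x. (\<lambda>n. \<Sum>j<n. blinfun_apply (es j) x *\<^sub>R e j) \<longlonglongrightarrow> x)"

definition weak_star_schauder_basis ::
  "(nat \<Rightarrow> 'a::real_normed_vector) \<Rightarrow> (nat \<Rightarrow> ('a \<Rightarrow>\<^sub>L real)) \<Rightarrow> bool" where
  "weak_star_schauder_basis e es \<longleftrightarrow>
     (\<forall>xs::'a \<Rightarrow>\<^sub>L real. \<forall>x.
        (\<lambda>n. \<Sum>j<n. blinfun_apply xs (e j) * blinfun_apply (es j) x) \<longlonglongrightarrow> blinfun_apply xs x)"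

definition unconditional_seq :: "(nat \<Rightarrow> 'b::real_normed_vector) \<Rightarrow> bool" where
  "unconditional_seq es \<longleftrightarrow> (\<exists>C\<ge>1. \<forall>n a \<gamma> M. (\<forall>j. \<bar>\<gamma> j\<bar> \<le> M) \<longrightarrow>
      norm (\<Sum>j<n. (\<gamma> j * a j) *\<^sub>R es j) \<le> C * M * norm (\<Sum>j<n. a j *\<^sub>R es j))"

definition proj ::
  "(nat \<Rightarrow> 'a::real_normed_vector) \<Rightarrow> (nat \<Rightarrow> ('a \<Rightarrow>\<^sub>L real)) \<Rightarrow> nat set \<Rightarrow>
     ('a \<Rightarrow>\<^sub>L real) \<Rightarrow> ('a \<Rightarrow>\<^sub>L real)" where
  "proj e es A xs = (THE y. \<forall>x.
     (\<lambda>n. \<Sum>j\<in>A \<inter> {..<n}. blinfun_apply xs (e j) * blinfun_apply (es j) x)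
        \<longlonglongrightarrow> blinfun_apply y x)"

definition condition_C ::
  "(nat \<Rightarrow> 'a::real_normed_vector) \<Rightarrow> (nat \<Rightarrow> ('a \<Rightarrow>\<^sub>L real)) \<Rightarrow> bool" where
  "condition_C e es \<longleftrightarrow>
    (\<forall>\<Lambda>::nat set. \<forall>\<theta>::real. infinite \<Lambda> \<and> \<theta> > 0 \<longrightarrow>
      (\<exists>A :: nat \<Rightarrow> nat set.
         (\<forall>j. A j \<subseteq> \<Lambda> \<and> infinite (A j)) \<and>
         (\<forall>i j. i \<noteq> j \<longrightarrow> A i \<inter> A j = {}) \<and>
         (\<forall>xs :: nat \<Rightarrow> ('a \<Rightarrow>\<^sub>L real). (\<forall>j. norm (xs j) \<le> 1) \<longrightarrow>
            (\<exists>(a :: nat \<Rightarrow> real) (y :: 'a \<Rightarrow>\<^sub>L real).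
               summable (\<lambda>j. \<bar>a j\<bar>) \<and> (\<Sum>j. \<bar>a j\<bar>) = 1 \<and>
               (\<forall>x. (\<lambda>n. \<Sum>j<n. a j * blinfun_apply (proj e es (A j) (xs j)) x)
                      \<longlonglongrightarrow> blinfun_apply y x) \<and>
               norm y \<le> \<theta>))))"

definition l1_embeds :: "'b::real_normed_vector itself \<Rightarrow> bool" where
  "l1_embeds _ \<longleftrightarrow> (\<exists>(T :: (nat \<Rightarrow> real) \<Rightarrow> 'b) c C.
     c > 0 \<and>
     (\<forall>a b. summable (\<lambda>j. \<bar>a j\<bar>) \<longrightarrow> summable (\<lambda>j. \<bar>b j\<bar>) \<longrightarrow>
        T (\<lambda>j. a j + b j) = T a + T b) \<and>
     (\<forall>a r. summable (\<lambda>j. \<bar>a j\<bar>) \<longrightarrow> T (\<lambda>j. r * a j) = r *\<^sub>R T a) \<and>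
     (\<forall>a. summable (\<lambda>j. \<bar>a j\<bar>) \<longrightarrow>
        c * (\<Sum>j. \<bar>a j\<bar>) \<le> norm (T a) \<and> norm (T a) \<le> C * (\<Sum>j. \<bar>a j\<bar>)))"

end

theory Submission
  imports Defs
begin

text \<open>If condition (C) fails for some \<Lambda> and \<theta>, split \<Lambda> into infinitely many disjoint
  infinite sets A_j and take a bad sequence (x_j^*) for this split. The functionals
  z_j = P_{A_j} x_j^* are uniformly bounded: the partial-sum operators of the basis (e_j) are
  (uniform boundedness principle), hence so are their adjoints, and restricting the adjoints to
  A costs only the unconditional constant of (e_j^*). A finite combination with
  norm (sum b_j z_j) < \<theta> * sum |b_j| would, after normalising b, witness (C) for (x_j^*);
  hence (z_j) satisfies a lower l^1 estimate and spans a copy of l^1 in U^*.\<close>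

lemma Baire_closed_cover_has_interior:
  fixes F :: "nat \<Rightarrow> 'a::banach set"
  assumes "\<And>k. closed (F k)" and "(\<Union>k. F k) = UNIV"
  shows "\<exists>k. interior (F k) \<noteq> {}"
proof (rule ccontr)
  assume "\<not> ?thesis"
  then have "euclidean interior_of \<Union>(range F) = {}"
    by (intro Baire_category_alt) (auto simp: completely_metrizable_space_euclidean assms(1))
  then show False using assms(2) by simp
qed

lemma linear_bound_from_cball:
  fixes f :: "'a::real_normed_vector \<Rightarrow> 'b::real_normed_vector"
  assumes "linear f" and "r > 0" and bound: "\<And>x. x \<in> cball x0 r \<Longrightarrow> norm (f x) \<le> M"
  shows "norm (f y) \<le> 2 * M / r * norm y"
proof (cases "y = 0")
  case True
  then show ?thesis using linear_0[OF assms(1)] by simp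
next
  case False
  define u where "u = (r / norm y) *\<^sub>R y"
  have "norm u = r" using False \<open>r > 0\<close> by (simp add: u_def)
  then have "norm (f (x0 + u)) \<le> M" and "norm (f x0) \<le> M"
    using \<open>r > 0\<close> by (auto intro!: bound simp: dist_norm)
  then have "norm (f u) \<le> 2 * M"
    using norm_triangle_ineq4[of "f (x0 + u)" "f x0"] linear_add[OF assms(1)] by simp
  moreover have "f u = (r / norm y) *\<^sub>R f y"
    unfolding u_def using linear_scale[OF assms(1)] by simp
  ultimately show ?thesis using False \<open>r > 0\<close> by (simp add: field_simps)
qed

theorem uniform_boundedness:
  fixes Q :: "nat \<Rightarrow> 'a::banach \<Rightarrow> 'b::real_normed_vector"
  assumes linear: "\<And>n. bounded_linear (Q n)" and pointwise: "\<And>x. \<exists>B. \<forall>n. norm (Q n x) \<le> B"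
  shows "\<exists>B\<ge>0. \<forall>n x. norm (Q n x) \<le> B * norm x"
proof -
  define F where "F k = (\<Inter>n. {x. norm (Q n x) \<le> real k})" for k :: nat
  have "closed (F k)" for k
    unfolding F_def using linear
    by (intro closed_INT ballI closed_Collect_le continuous_intros linear_continuous_on)
  moreover have "(\<Union>k. F k) = UNIV"
  proof safe
    fix x
    obtain B where "\<forall>n. norm (Q n x) \<le> B" using pointwise by blast
    moreover obtain k :: nat where "B \<le> real k" using real_arch_simple by blast
    ultimately show "x \<in> (\<Union>k. F k)" unfolding F_def by (auto intro: order_trans)
  qed auto
  ultimately obtain k where "interior (F k) \<noteq> {}"
    using Baire_closed_cover_has_interior by blast
  then obtain x0 r where "r > 0" "cball x0 r \<subseteq> F k"
    by (meson all_not_in_conv open_contains_cball open_interior interior_subset order_trans)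
  then have "norm (Q n y) \<le> 2 * real k / r * norm y" for n y
    using linear[of n] by (intro linear_bound_from_cball) (auto simp: F_def bounded_linear.linear)
  moreover have "2 * real k / r \<ge> 0" using \<open>r > 0\<close> by simp
  ultimately show ?thesis by blast
qed

lemma coordinate_functionals_partial_sums_bounded:
  fixes e :: "nat \<Rightarrow> 'a::banach" and es :: "nat \<Rightarrow> 'a \<Rightarrow>\<^sub>L real"
  assumes "coordinate_functionals e es"
  shows "\<exists>B\<ge>0. \<forall>n x. norm (\<Sum>j<n. es j x *\<^sub>R e j) \<le> B * norm x"
proof (rule uniform_boundedness)
  show "bounded_linear (\<lambda>x. \<Sum>j<n. es j x *\<^sub>R e j)" for n
    by (intro bounded_linear_sum bounded_linear_scaleR_const blinfun.bounded_linear_right)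
  show "\<exists>B. \<forall>n. norm (\<Sum>j<n. es j x *\<^sub>R e j) \<le> B" for x
  proof -
    have "convergent (\<lambda>n. \<Sum>j<n. es j x *\<^sub>R e j)"
      using assms unfolding coordinate_functionals_def convergent_def by blast
    then have "Bseq (\<lambda>n. \<Sum>j<n. es j x *\<^sub>R e j)" by (rule convergent_imp_Bseq)
    then show ?thesis unfolding Bseq_def by blast
  qed
qed

lemma dual_partial_sums_bounded:
  fixes e :: "nat \<Rightarrow> 'a::banach" and es :: "nat \<Rightarrow> 'a \<Rightarrow>\<^sub>L real"
  assumes "coordinate_functionals e es"
  shows "\<exists>B\<ge>0. \<forall>n xs. norm (\<Sum>j<n. blinfun_apply xs (e j) *\<^sub>R es j) \<le> B * norm xs"
proof -
  obtain B where B: "B \<ge> 0" "\<And>n x. norm (\<Sum>j<n. es j x *\<^sub>R e j) \<le> B * norm x"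
    using coordinate_functionals_partial_sums_bounded[OF assms] by blast
  have "norm (\<Sum>j<n. xs (e j) *\<^sub>R es j) \<le> B * norm xs" for n and xs :: "'a \<Rightarrow>\<^sub>L real"
  proof (rule norm_blinfun_bound)
    show "0 \<le> B * norm xs" using B(1) by simp
    fix x
    have "norm ((\<Sum>j<n. xs (e j) *\<^sub>R es j) x) = norm (xs (\<Sum>j<n. es j x *\<^sub>R e j))"
      by (simp add: blinfun.sum_left blinfun.sum_right blinfun.scaleR_left
          blinfun.scaleR_right mult.commute)
    also have "\<dots> \<le> norm xs * norm (\<Sum>j<n. es j x *\<^sub>R e j)" by (rule norm_blinfun)
    also have "\<dots> \<le> norm xs * (B * norm x)" using B(2) by (simp add: mult_left_mono)
    finally show "norm ((\<Sum>j<n. xs (e j) *\<^sub>R es j) x) \<le> B * norm xs * norm x"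
      by (simp add: ac_simps)
  qed
  with B(1) show ?thesis by blast
qed

lemma restricted_dual_partial_sums_bounded:
  fixes e :: "nat \<Rightarrow> 'a::banach" and es :: "nat \<Rightarrow> 'a \<Rightarrow>\<^sub>L real"
  assumes "coordinate_functionals e es" and "unconditional_seq es"
  shows "\<exists>K\<ge>0. \<forall>A n xs.
    norm (\<Sum>j\<in>A \<inter> {..<n}. blinfun_apply xs (e j) *\<^sub>R es j) \<le> K * norm xs"
proof -
  obtain B where B: "B \<ge> 0" "\<And>n xs. norm (\<Sum>j<n. blinfun_apply xs (e j) *\<^sub>R es j) \<le> B * norm xs"
    using dual_partial_sums_bounded[OF assms(1)] by blast
  obtain C where C: "C \<ge> 1" "\<And>n a \<gamma> M. (\<forall>j. \<bar>\<gamma> j\<bar> \<le> M) \<Longrightarrow>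
      norm (\<Sum>j<n. (\<gamma> j * a j) *\<^sub>R es j) \<le> C * M * norm (\<Sum>j<n. a j *\<^sub>R es j)"
    using assms(2) unfolding unconditional_seq_def by blast
  have "norm (\<Sum>j\<in>A \<inter> {..<n}. xs (e j) *\<^sub>R es j) \<le> C * B * norm xs"
    for A n and xs :: "'a \<Rightarrow>\<^sub>L real"
  proof -
    have "(\<Sum>j\<in>A \<inter> {..<n}. xs (e j) *\<^sub>R es j) = (\<Sum>j<n. (indicator A j * xs (e j)) *\<^sub>R es j)"
      by (subst Int_commute, subst sum.inter_restrict) (auto intro: sum.cong)
    moreover have "norm (\<Sum>j<n. (indicator A j * xs (e j)) *\<^sub>R es j)
        \<le> C * 1 * norm (\<Sum>j<n. xs (e j) *\<^sub>R es j)"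
      by (rule C(2)) simp
    moreover have "C * norm (\<Sum>j<n. xs (e j) *\<^sub>R es j) \<le> C * (B * norm xs)"
      using B(2) C(1) by (simp add: mult_left_mono)
    ultimately show ?thesis by simp
  qed
  moreover have "C * B \<ge> 0" using B(1) C(1) by simp
  ultimately show ?thesis by blast
qed

lemma unconditional_basis_restricted_expansion_convergent:
  fixes e :: "nat \<Rightarrow> 'a::banach" and es :: "nat \<Rightarrow> 'a \<Rightarrow>\<^sub>L real"
  assumes "unconditional_basis e" and "coordinate_functionals e es"
  shows "convergent (\<lambda>n. \<Sum>j\<in>A \<inter> {..<n}. es j x *\<^sub>R e j)"
proof -
  let ?f = "\<lambda>j. es j x *\<^sub>R e j"
  have "(\<lambda>n. \<Sum>j<n. ?f j) \<longlonglongrightarrow> x"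
    using assms(2) unfolding coordinate_functionals_def by blast
  then have "(?f has_sum x) UNIV"
    using assms(1) unfolding unconditional_basis_def
    by (elim conjE allE[of _ x] allE[of _ "\<lambda>j. es j x"]) blast
  then have "?f summable_on A" by (meson summable_on_def summable_on_subset_banach top_greatest)
  then obtain R where "(?f has_sum R) A" unfolding summable_on_def by blast
  then have "((\<lambda>j. if j \<in> A then ?f j else 0) has_sum R) UNIV"
    by (subst has_sum_cong_neutral[where T = A]) auto
  then have "(\<lambda>j. if j \<in> A then ?f j else 0) sums R" by (rule has_sum_imp_sums)
  moreover have "(\<Sum>j<n. if j \<in> A then ?f j else 0) = (\<Sum>j\<in>A \<inter> {..<n}. ?f j)" for n
    by (subst Int_commute) (simp add: sum.inter_restrict)
  ultimately show ?thesis unfolding sums_def convergent_def by auto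
qed

lemma blinfun_pointwise_limit:
  fixes T :: "nat \<Rightarrow> 'a::real_normed_vector \<Rightarrow>\<^sub>L 'b::real_normed_vector"
  assumes conv: "\<And>x. convergent (\<lambda>n. T n x)" and bound: "\<And>n. norm (T n) \<le> K"
  shows "\<exists>y. (\<forall>x. (\<lambda>n. T n x) \<longlonglongrightarrow> blinfun_apply y x) \<and> norm y \<le> K"
proof -
  define L where "L x = lim (\<lambda>n. T n x)" for x
  have L: "(\<lambda>n. T n x) \<longlonglongrightarrow> L x" for x
    using conv by (simp add: L_def convergent_LIMSEQ_iff)
  have "K \<ge> 0" using bound[of 0] norm_ge_zero order_trans by blast
  have bound_L: "norm (L x) \<le> K * norm x" for x
  proof (rule LIMSEQ_le_const2[OF tendsto_norm[OF L]])
    have "norm (T n x) \<le> K * norm x" for n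
      using norm_blinfun[of "T n" x] bound[of n] by (meson mult_right_mono norm_ge_zero order_trans)
    then show "\<exists>N. \<forall>n\<ge>N. norm (T n x) \<le> K * norm x" by blast
  qed
  have "bounded_linear L"
  proof (rule bounded_linear_intro[of L K])
    show "L (x + z) = L x + L z" for x z
      using tendsto_add[OF L[of x] L[of z]] L[of "x + z"]
      by (simp add: blinfun.add_right LIMSEQ_unique)
    show "L (r *\<^sub>R x) = r *\<^sub>R L x" for r x
      using tendsto_scaleR[OF tendsto_const L[of x], of r] L[of "r *\<^sub>R x"]
      by (simp add: blinfun.scaleR_right LIMSEQ_unique)
    show "norm (L x) \<le> norm x * K" for x
      using bound_L[of x] by (simp add: mult.commute)
  qed
  then have Blinfun_L: "blinfun_apply (Blinfun L) = L" by (rule bounded_linear_Blinfun_apply)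
  have "norm (Blinfun L) \<le> K"
    by (rule norm_blinfun_bound) (use \<open>K \<ge> 0\<close> bound_L in \<open>simp_all add: Blinfun_L\<close>)
  then show ?thesis using L by (intro exI[of _ "Blinfun L"]) (simp add: Blinfun_L)
qed

lemma proj_eqI:
  fixes es :: "nat \<Rightarrow> 'a::real_normed_vector \<Rightarrow>\<^sub>L real" and xs :: "'a \<Rightarrow>\<^sub>L real"
  assumes "\<And>x. (\<lambda>n. \<Sum>j\<in>A \<inter> {..<n}. xs (e j) * es j x) \<longlonglongrightarrow> blinfun_apply y x"
  shows "proj e es A xs = y"
  unfolding proj_def
proof (rule the_equality)
  show "\<forall>x. (\<lambda>n. \<Sum>j\<in>A \<inter> {..<n}. xs (e j) * es j x) \<longlonglongrightarrow> blinfun_apply y x" using assms by blast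
  fix y' assume y': "\<forall>x. (\<lambda>n. \<Sum>j\<in>A \<inter> {..<n}. xs (e j) * es j x) \<longlonglongrightarrow> blinfun_apply y' x"
  show "y' = y"
    by (rule blinfun_eqI, rule LIMSEQ_unique[OF y'[rule_format] assms])
qed

lemma proj_norm_bounded:
  fixes e :: "nat \<Rightarrow> 'a::banach" and es :: "nat \<Rightarrow> 'a \<Rightarrow>\<^sub>L real"
  assumes "unconditional_basis e" and "coordinate_functionals e es" and "unconditional_seq es"
  shows "\<exists>K\<ge>0. \<forall>A xs. norm (proj e es A xs) \<le> K * norm xs"
proof -
  obtain K where K: "K \<ge> 0"
    "\<And>A n xs. norm (\<Sum>j\<in>A \<inter> {..<n}. blinfun_apply xs (e j) *\<^sub>R es j) \<le> K * norm xs"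
    using restricted_dual_partial_sums_bounded[OF assms(2,3)] by blast
  have "norm (proj e es A xs) \<le> K * norm xs" for A xs
  proof -
    define T where "T n = (\<Sum>j\<in>A \<inter> {..<n}. xs (e j) *\<^sub>R es j)" for n
    have T_apply: "T n x = xs (\<Sum>j\<in>A \<inter> {..<n}. es j x *\<^sub>R e j)" for n x
      by (simp add: T_def blinfun.sum_left blinfun.sum_right blinfun.scaleR_left
          blinfun.scaleR_right mult.commute)
    have "convergent (\<lambda>n. T n x)" for x
      unfolding T_apply
      by (rule bounded_linear.convergent[OF blinfun.bounded_linear_right
            unconditional_basis_restricted_expansion_convergent[OF assms(1,2)]])
    then obtain y where y: "\<forall>x. (\<lambda>n. T n x) \<longlonglongrightarrow> blinfun_apply y x" "norm y \<le> K * norm xs"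
      using blinfun_pointwise_limit[of T "K * norm xs"] K(2) unfolding T_def by blast
    have "proj e es A xs = y"
      by (rule proj_eqI) (use y(1) in \<open>simp add: T_def blinfun.sum_left blinfun.scaleR_left\<close>)
    with y(2) show ?thesis by simp
  qed
  with K(1) show ?thesis by blast
qed

lemma infinite_set_splits_into_infinite_parts:
  fixes \<Lambda> :: "nat set"
  assumes "infinite \<Lambda>"
  shows "\<exists>A :: nat \<Rightarrow> nat set. (\<forall>j. A j \<subseteq> \<Lambda> \<and> infinite (A j)) \<and>
    (\<forall>i j. i \<noteq> j \<longrightarrow> A i \<inter> A j = {})"
proof -
  define g where "g j k = enumerate \<Lambda> (prod_encode (j, k))" for j k
  have "inj (enumerate \<Lambda>)"
    using strict_mono_enumerate[OF assms] strict_mono_imp_inj_on by blast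
  then have g_eq: "g i k = g j l \<longleftrightarrow> i = j \<and> k = l" for i j k l
    unfolding g_def by (simp add: inj_eq)
  define A where "A j = range (g j)" for j
  have "A j \<subseteq> \<Lambda>" for j
    unfolding A_def g_def using enumerate_in_set[OF assms] by blast
  moreover have "infinite (A j)" for j
    unfolding A_def by (rule range_inj_infinite, rule injI) (simp add: g_eq)
  moreover have "A i \<inter> A j = {}" if "i \<noteq> j" for i j
    using that by (auto simp: A_def g_eq)
  ultimately show ?thesis by blast
qed

definition small_l1_combination :: "(nat \<Rightarrow> 'a::real_normed_vector \<Rightarrow>\<^sub>L real) \<Rightarrow> real \<Rightarrow> bool"
  where "small_l1_combination z \<theta> \<longleftrightarrow> (\<exists>a y. summable (\<lambda>j. \<bar>a j\<bar>) \<and> (\<Sum>j. \<bar>a j\<bar>) = 1 \<and>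
    (\<forall>x. (\<lambda>n. \<Sum>j<n. a j * z j x) \<longlonglongrightarrow> blinfun_apply y x) \<and> norm y \<le> \<theta>)"

lemma condition_C_iff_small_l1_combination:
  "condition_C e es \<longleftrightarrow> (\<forall>\<Lambda> \<theta>. infinite \<Lambda> \<and> \<theta> > 0 \<longrightarrow>
    (\<exists>A. (\<forall>j. A j \<subseteq> \<Lambda> \<and> infinite (A j)) \<and> (\<forall>i j. i \<noteq> j \<longrightarrow> A i \<inter> A j = {}) \<and>
      (\<forall>xs. (\<forall>j. norm (xs j) \<le> 1) \<longrightarrow>
        small_l1_combination (\<lambda>j. proj e es (A j) (xs j)) \<theta>)))"
  unfolding condition_C_def small_l1_combination_def by (rule refl)

lemma small_l1_combinationI_finite:
  assumes "(\<Sum>j<N. \<bar>a j\<bar>) = 1" and "norm (\<Sum>j<N. a j *\<^sub>R z j) \<le> \<theta>"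
  shows "small_l1_combination z \<theta>"
proof -
  define a' where "a' j = (if j < N then a j else 0)" for j
  have vanish: "\<bar>a' j\<bar> = 0" if "j \<notin> {..<N}" for j using that by (simp add: a'_def)
  have "summable (\<lambda>j. \<bar>a' j\<bar>)" by (rule summable_finite[of "{..<N}"]) (use vanish in auto)
  moreover have "(\<Sum>j. \<bar>a' j\<bar>) = (\<Sum>j<N. \<bar>a' j\<bar>)"
    by (rule suminf_finite[of "{..<N}"]) (use vanish in auto)
  moreover have "(\<Sum>j<N. \<bar>a' j\<bar>) = (\<Sum>j<N. \<bar>a j\<bar>)"
    by (rule sum.cong) (simp_all add: a'_def)
  moreover have "(\<lambda>n. \<Sum>j<n. a' j * z j x) \<longlonglongrightarrow> (\<Sum>j<N. a j *\<^sub>R z j) x" for x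
  proof (rule tendsto_eventually, unfold eventually_sequentially, intro exI allI impI)
    fix n assume "N \<le> n"
    then have "(\<Sum>j<n. a' j * z j x) = (\<Sum>j<N. a j * z j x)"
      by (intro sum.mono_neutral_cong_right) (auto simp: a'_def)
    then show "(\<Sum>j<n. a' j * z j x) = (\<Sum>j<N. a j *\<^sub>R z j) x"
      by (simp add: blinfun.sum_left blinfun.scaleR_left)
  qed
  ultimately show ?thesis using assms unfolding small_l1_combination_def by auto
qed

lemma lower_l1_estimate_if_not_small_l1_combination:
  assumes "\<not> small_l1_combination z \<theta>"
  shows "\<theta> * (\<Sum>j<N. \<bar>b j\<bar>) \<le> norm (\<Sum>j<N. b j *\<^sub>R z j)"
proof (cases "(\<Sum>j<N. \<bar>b j\<bar>) = 0")
  case True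
  then show ?thesis by simp
next
  case False
  define s where "s = (\<Sum>j<N. \<bar>b j\<bar>)"
  have "s > 0" using False sum_nonneg[of "{..<N}" "\<lambda>j. \<bar>b j\<bar>"] unfolding s_def by linarith
  then have "(\<Sum>j<N. \<bar>b j / s\<bar>) = 1" by (simp add: s_def sum_divide_distrib[symmetric])
  then have "\<not> norm (\<Sum>j<N. (b j / s) *\<^sub>R z j) \<le> \<theta>"
    using assms small_l1_combinationI_finite[where a = "\<lambda>j. b j / s"] by blast
  moreover have "(\<Sum>j<N. (b j / s) *\<^sub>R z j) = (1 / s) *\<^sub>R (\<Sum>j<N. b j *\<^sub>R z j)"
    by (simp add: scaleR_sum_right)
  ultimately show ?thesis using \<open>s > 0\<close> by (simp add: s_def field_simps)
qed

lemma summable_norm_scaleR_bounded: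
  fixes z :: "nat \<Rightarrow> 'b::real_normed_vector"
  assumes "\<And>j. norm (z j) \<le> K" and "summable (\<lambda>j. \<bar>a j\<bar>)"
  shows "summable (\<lambda>j. norm (a j *\<^sub>R z j))"
proof (rule summable_comparison_test)
  show "\<exists>N. \<forall>n\<ge>N. norm (norm (a n *\<^sub>R z n)) \<le> K * \<bar>a n\<bar>"
    using assms(1) by (auto simp: mult.commute[of K] mult_left_mono)
  show "summable (\<lambda>n. K * \<bar>a n\<bar>)" using assms(2) by (rule summable_mult)
qed

lemma norm_suminf_scaleR_le:
  fixes z :: "nat \<Rightarrow> 'b::banach"
  assumes "\<And>j. norm (z j) \<le> K" and "summable (\<lambda>j. \<bar>a j\<bar>)"
  shows "norm (\<Sum>j. a j *\<^sub>R z j) \<le> K * (\<Sum>j. \<bar>a j\<bar>)"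
proof -
  have summable: "summable (\<lambda>j. norm (a j *\<^sub>R z j))"
    using assms by (rule summable_norm_scaleR_bounded)
  then have "norm (\<Sum>j. a j *\<^sub>R z j) \<le> (\<Sum>j. norm (a j *\<^sub>R z j))" by (rule summable_norm)
  also have "\<dots> \<le> (\<Sum>j. K * \<bar>a j\<bar>)"
  proof (rule suminf_le[OF _ summable summable_mult[OF assms(2)]])
    show "norm (a j *\<^sub>R z j) \<le> K * \<bar>a j\<bar>" for j
      using assms(1)[of j] by (simp add: mult.commute[of K] mult_left_mono)
  qed
  also have "\<dots> = K * (\<Sum>j. \<bar>a j\<bar>)" by (rule suminf_mult[OF assms(2)])
  finally show ?thesis .
qed

lemma l1_embedsI:
  fixes z :: "nat \<Rightarrow> 'b::banach"
  assumes "\<theta> > 0" and bounded: "\<And>j. norm (z j) \<le> K"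
    and lower: "\<And>N b. \<theta> * (\<Sum>j<N. \<bar>b j\<bar>) \<le> norm (\<Sum>j<N. b j *\<^sub>R z j)"
  shows "l1_embeds TYPE('b)"
proof -
  define T where "T a = (\<Sum>j. a j *\<^sub>R z j)" for a :: "nat \<Rightarrow> real"
  have summable: "summable (\<lambda>j. a j *\<^sub>R z j)" if "summable (\<lambda>j. \<bar>a j\<bar>)" for a
    by (rule summable_norm_cancel[OF summable_norm_scaleR_bounded[OF bounded that]])
  show ?thesis unfolding l1_embeds_def
  proof (rule exI[of _ T], rule exI[of _ \<theta>], rule exI[of _ K], intro conjI allI impI)
    fix a b :: "nat \<Rightarrow> real"
    assume "summable (\<lambda>j. \<bar>a j\<bar>)" and "summable (\<lambda>j. \<bar>b j\<bar>)"
    then show "T (\<lambda>j. a j + b j) = T a + T b"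
      unfolding T_def using suminf_add[OF summable summable] by (simp add: scaleR_add_left)
  next
    fix a :: "nat \<Rightarrow> real" and r :: real
    assume "summable (\<lambda>j. \<bar>a j\<bar>)"
    then show "T (\<lambda>j. r * a j) = r *\<^sub>R T a"
      unfolding T_def using suminf_scaleR_right[OF summable[of a], of r] by simp
  next
    fix a :: "nat \<Rightarrow> real"
    assume a: "summable (\<lambda>j. \<bar>a j\<bar>)"
    have "(\<lambda>n. \<theta> * (\<Sum>j<n. \<bar>a j\<bar>)) \<longlonglongrightarrow> \<theta> * (\<Sum>j. \<bar>a j\<bar>)"
      by (intro tendsto_mult tendsto_const summable_LIMSEQ a)
    moreover have "(\<lambda>n. norm (\<Sum>j<n. a j *\<^sub>R z j)) \<longlonglongrightarrow> norm (T a)"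
      unfolding T_def by (intro tendsto_norm summable_LIMSEQ summable a)
    ultimately show "\<theta> * (\<Sum>j. \<bar>a j\<bar>) \<le> norm (T a)"
      using lower by (intro LIMSEQ_le) auto
    show "norm (T a) \<le> K * (\<Sum>j. \<bar>a j\<bar>)"
      unfolding T_def using bounded a by (rule norm_suminf_scaleR_le)
  qed (rule \<open>\<theta> > 0\<close>)
qed

theorem mainTheorem6:
  fixes e :: "nat \<Rightarrow> 'a::banach" and es :: "nat \<Rightarrow> ('a \<Rightarrow>\<^sub>L real)"
  assumes "unconditional_basis e"
    and "\<forall>j. norm (e j) = 1"
    and "coordinate_functionals e es"
    and "\<forall>j. norm (es j) = 1"
    and "weak_star_schauder_basis e es"
    and "unconditional_seq es"
    and "\<not> l1_embeds TYPE('a \<Rightarrow>\<^sub>L real)"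
  shows "condition_C e es"
  unfolding condition_C_iff_small_l1_combination
proof (intro allI impI)
  fix \<Lambda> :: "nat set" and \<theta> :: real
  assume "infinite \<Lambda> \<and> \<theta> > 0"
  then have "infinite \<Lambda>" and "\<theta> > 0" by auto
  obtain A :: "nat \<Rightarrow> nat set" where A: "\<forall>j. A j \<subseteq> \<Lambda> \<and> infinite (A j)"
    "\<forall>i j. i \<noteq> j \<longrightarrow> A i \<inter> A j = {}"
    using infinite_set_splits_into_infinite_parts[OF \<open>infinite \<Lambda>\<close>] by blast
  obtain K where K: "K \<ge> 0" "\<And>A xs. norm (proj e es A xs) \<le> K * norm xs"
    using proj_norm_bounded[OF assms(1,3,6)] by blast
  have small: "small_l1_combination (\<lambda>j. proj e es (A j) (xs j)) \<theta>"
    if xs: "\<forall>j. norm (xs j) \<le> 1" for xs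
  proof (rule ccontr)
    assume not_small: "\<not> small_l1_combination (\<lambda>j. proj e es (A j) (xs j)) \<theta>"
    have "norm (proj e es (A j) (xs j)) \<le> K" for j
      using K(2)[of "A j" "xs j"] mult_left_le[of "norm (xs j)" K] xs K(1) by simp
    then have "l1_embeds TYPE('a \<Rightarrow>\<^sub>L real)"
      by (rule l1_embedsI[OF \<open>\<theta> > 0\<close> _ lower_l1_estimate_if_not_small_l1_combination[OF not_small]])
    with assms(7) show False by contradiction
  qed
  show "\<exists>A. (\<forall>j. A j \<subseteq> \<Lambda> \<and> infinite (A j)) \<and> (\<forall>i j. i \<noteq> j \<longrightarrow> A i \<inter> A j = {}) \<and>
      (\<forall>xs. (\<forall>j. norm (xs j) \<le> 1) \<longrightarrow> small_l1_combination (\<lambda>j. proj e es (A j) (xs j)) \<theta>)"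
    using A small by (intro exI[of _ A]) simp
qed

end
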